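(* Let $G$ be a graph of order $p$ with at least one edge and independence number $\alpha$. Then $str(G)\ge 2p-2\alpha+1$.
   Context: For a graph $G$ of order $p$, a numbering is a bijection $f:V(G)\to[1,p]$; $str_f(G)=\max\{f(u)+f(v): uv\in E(G)\}$ and $str(G)=\min_f str_f(G)$. *)

theory Defs
  imports Main
begin

definition simple_graph :: "'a set \<Rightarrow> 'a set set \<Rightarrow> bool" where
  "simple_graph V E \<longleftrightarrow> finite V \<and> (\<forall>e\<in>E. e \<subseteq> V \<and> card e = 2)"

definition numberings :: "'a set \<Rightarrow> ('a \<Rightarrow> nat) set" where
  "numberings V = {f. bij_betw f V {1..card V}}"

definition str_f :: "'a set set \<Rightarrow> ('a \<Rightarrow> nat) \<Rightarrow> nat" where
  "str_f E f = Max {f u + f v | u v. {u, v} \<in> E}"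

definition strength :: "'a set \<Rightarrow> 'a set set \<Rightarrow> nat" where
  "strength V E = Min (str_f E ` numberings V)"

definition independent_set :: "'a set \<Rightarrow> 'a set set \<Rightarrow> 'a set \<Rightarrow> bool" where
  "independent_set V E S \<longleftrightarrow> S \<subseteq> V \<and> (\<forall>u\<in>S. \<forall>v\<in>S. {u, v} \<notin> E)"

definition independence_number :: "'a set \<Rightarrow> 'a set set \<Rightarrow> nat" where
  "independence_number V E = Max (card ` {S. independent_set V E S})"

end

theory Submission
  imports Defs
begin

text \<open>Fix a numbering f attaining str(G) = s. Two distinct labels that are both at least
  \<lceil>s/2\<rceil> sum to more than s, so the vertices labelled \<lceil>s/2\<rceil>, ..., p form an
  independent set. It has p + 1 - \<lceil>s/2\<rceil> elements, hence
  \<alpha> \<ge> p + 1 - \<lceil>s/2\<rceil>, which rearranges to s \<ge> 2p - 2\<alpha> + 1.\<close>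

lemma numberings_nonempty:
  assumes "finite V"
  shows "numberings V \<noteq> {}"
proof -
  have "\<exists>g. bij_betw g V {1..card V}"
    using assms by (intro finite_same_card_bij) auto
  then show ?thesis unfolding numberings_def by auto
qed

lemma numbering_bij:
  assumes "f \<in> numberings V"
  shows "bij_betw f V {1..card V}"
  using assms unfolding numberings_def by simp

lemma simple_graph_edgeE:
  assumes "simple_graph V E" and "e \<in> E"
  obtains u v where "e = {u, v}" "u \<noteq> v" "u \<in> V" "v \<in> V"
  using assms unfolding simple_graph_def by (metis card_2_iff insert_subset)

lemma finite_edge_sums:
  assumes "simple_graph V E"
  shows "finite {f u + f v | u v. {u, v} \<in> E}"
proof -
  have "{f u + f v | u v. {u, v} \<in> E} \<subseteq> (\<lambda>(u, v). f u + f v) ` (V \<times> V)"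
    using assms unfolding simple_graph_def by fastforce
  moreover have "finite V" using assms unfolding simple_graph_def by simp
  ultimately show ?thesis by (meson finite_SigmaI finite_imageI finite_subset)
qed

lemma edge_sum_le_str_f:
  assumes "simple_graph V E" and "{u, v} \<in> E"
  shows "f u + f v \<le> str_f E f"
  unfolding str_f_def using assms by (intro Max_ge[OF finite_edge_sums]) blast+

lemma str_f_le_twice_card:
  assumes "simple_graph V E" and "E \<noteq> {}" and "f \<in> numberings V"
  shows "str_f E f \<le> 2 * card V"
proof -
  obtain e where "e \<in> E" using assms(2) by auto
  with assms(1) obtain u v where "{u, v} \<in> E" by (metis simple_graph_edgeE)
  then have nonempty: "{f u + f v | u v. {u, v} \<in> E} \<noteq> {}" by blast
  have "f u + f v \<le> 2 * card V" if "{u, v} \<in> E" for u v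
  proof -
    from assms(1) that have "u \<in> V" "v \<in> V"
      unfolding simple_graph_def by auto
    then have "f u \<le> card V" "f v \<le> card V"
      using numbering_bij[OF assms(3)] by (auto dest: bij_betw_apply)
    then show ?thesis by simp
  qed
  then show ?thesis
    unfolding str_f_def using Max_le_iff[OF finite_edge_sums[OF assms(1)] nonempty] by blast
qed

lemma strength_attained:
  assumes "simple_graph V E" and "E \<noteq> {}"
  obtains f where "f \<in> numberings V" "strength V E = str_f E f"
proof -
  have "finite (str_f E ` numberings V)"
  proof (rule finite_subset)
    show "str_f E ` numberings V \<subseteq> {..2 * card V}"
      using str_f_le_twice_card[OF assms] by auto
  qed simp
  moreover have "numberings V \<noteq> {}"
    using assms(1) numberings_nonempty unfolding simple_graph_def by blast
  ultimately have "strength V E \<in> str_f E ` numberings V"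
    unfolding strength_def by (intro Min_in) auto
  then show ?thesis using that by (auto simp only: image_iff)
qed

lemma independent_set_upper_labels:
  fixes s t :: nat
  assumes "simple_graph V E" and "inj_on f V"
    and edge_bound: "\<And>u v. {u, v} \<in> E \<Longrightarrow> f u + f v \<le> s"
    and "s \<le> 2 * t"
  shows "independent_set V E {x \<in> V. t \<le> f x}"
  unfolding independent_set_def
proof (intro conjI ballI notI)
  fix x y assume x: "x \<in> {x \<in> V. t \<le> f x}" and y: "y \<in> {x \<in> V. t \<le> f x}"
    and xy: "{x, y} \<in> E"
  from assms(1) xy have "x \<noteq> y" by (metis simple_graph_edgeE doubleton_eq_iff)
  with x y assms(2) have "f x \<noteq> f y" by (auto dest: inj_onD)
  then have "f x < f y \<or> f y < f x" by linarith
  with x y have "s < f x + f y" using assms(4) by auto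
  with edge_bound[OF xy] show False by simp
qed auto

lemma card_upper_labels:
  assumes "bij_betw f V {1..p}" and "1 \<le> k"
  shows "card {x \<in> V. k \<le> f x} = p + 1 - k"
proof -
  have "bij_betw f {x \<in> V. k \<le> f x} (f ` {x \<in> V. k \<le> f x})"
    using assms(1) by (rule bij_betw_subset) auto
  moreover have "f ` {x \<in> V. k \<le> f x} = {k..p}"
  proof -
    have "f ` {x \<in> V. k \<le> f x} = {n \<in> f ` V. k \<le> n}" by blast
    then show ?thesis using assms unfolding bij_betw_def by auto
  qed
  ultimately show ?thesis by (simp add: bij_betw_same_card)
qed

lemma card_le_independence_number:
  assumes "simple_graph V E" and "independent_set V E S"
  shows "card S \<le> independence_number V E"
proof -
  have "finite V" using assms(1) unfolding simple_graph_def by simp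
  then have "card ` {S. independent_set V E S} \<subseteq> {..card V}"
    unfolding independent_set_def by (auto intro: card_mono)
  then have "finite (card ` {S. independent_set V E S})"
    by (rule finite_subset) simp
  moreover have "card S \<in> card ` {S. independent_set V E S}"
    using assms(2) by simp
  ultimately show ?thesis
    unfolding independence_number_def by (rule Max_ge)
qed

theorem mainTheorem11:
  fixes V :: "'a set" and E :: "'a set set"
  assumes "simple_graph V E"
    and "E \<noteq> {}"
  shows "int (strength V E) \<ge> 2 * int (card V) - 2 * int (independence_number V E) + 1"
proof -
  obtain f where f: "f \<in> numberings V" and str: "strength V E = str_f E f"
    using strength_attained[OF assms] .
  define s where "s = str_f E f"
  define t where "t = (s + 1) div 2"
  have bij: "bij_betw f V {1..card V}" using numbering_bij[OF f] .
  have edge_bound: "f u + f v \<le> s" if "{u, v} \<in> E" for u v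
    unfolding s_def using edge_sum_le_str_f[OF assms(1) that] .
  obtain e where "e \<in> E" using assms(2) by auto
  with assms(1) obtain u v where "{u, v} \<in> E" "u \<in> V" "v \<in> V"
    by (metis simple_graph_edgeE)
  moreover from \<open>u \<in> V\<close> \<open>v \<in> V\<close> have "1 \<le> f u" "1 \<le> f v"
    using bij by (auto dest: bij_betw_apply)
  ultimately have "2 \<le> s"
    using edge_bound by fastforce
  then have "1 \<le> t" unfolding t_def by simp
  have "independent_set V E {x \<in> V. t \<le> f x}"
    using independent_set_upper_labels[OF assms(1) bij_betw_imp_inj_on[OF bij] edge_bound]
    unfolding t_def by simp
  then have "card V + 1 - t \<le> independence_number V E"
    using card_le_independence_number[OF assms(1)] card_upper_labels[OF bij \<open>1 \<le> t\<close>]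
    by metis
  then show ?thesis unfolding str s_def[symmetric] t_def by linarith
qed

end
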